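(* Let $G$ be a topological group with identity $e$. If player ONE does not have a winning strategy in the game $\alpha^{\mathrm{game}}(G,e)$, then $G$ is $\alpha_{2^-}$, and in particular $G$ is Ramsey.
   Context: Convention: a "sequence" is a countably infinite set; a countably infinite set $A$ converges to $x$ if $x\notin A$ and every neighborhood of $x$ contains all but finitely many elements of $A$. $\lim_m x_{nm}=x$ means $x_{nm}\neq x$ for all $m$ and every neighborhood of $x$ contains $x_{nm}$ for all but finitely many $m$. The game $\alpha^{\mathrm{game}}(X,x)$: in the $n$-th inning ONE chooses a sequence $S_n\subseteq X$ converging to $x$, TWO responds with an infinite $T_n\subseteq S_n$; TWO wins if $\bigcup_nT_n$ converges to $x$, otherwise ONE wins. A space $X$ is $\alpha_{2^-}$ if for each $x\in X$, whenever $\lim_m x_{nm}=x$ for all $n$, there are $m_1<m_2<\dots$ with $\bigcup_n\{x_{1m_n},\dots,x_{nm_n}\}$ converging to $x$. A space $X$ is Ramsey if whenever $\lim_m x_{nm}=x_n$ for each $n$ and $\lim_n x_n=x$, there is an infinite $I\subseteq\mathbb N$ such that for each neighborhood $U$ of $x$ there is $k$ with $\{x_{nm}: k<n<m,\ n,m\in I\}\subseteq U$. *)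

theory Defs
  imports Complex_Main "HOL-Library.Countable_Set"
begin

definition conv_set :: "'a::topological_space set \<Rightarrow> 'a \<Rightarrow> bool" where
  "conv_set A x \<longleftrightarrow> countable A \<and> infinite A \<and> x \<notin> A \<and>
     (\<forall>U. open U \<and> x \<in> U \<longrightarrow> finite (A - U))"

definition seq_lim :: "(nat \<Rightarrow> 'a::topological_space) \<Rightarrow> 'a \<Rightarrow> bool" where
  "seq_lim f x \<longleftrightarrow> (\<forall>m. f m \<noteq> x) \<and> f \<longlonglongrightarrow> x"

text \<open>Game alpha^game(X,x). A strategy of ONE maps the list of TWO's previous
  moves T_1,...,T_{n-1} to ONE's next move S_n.  A history is legal if each
  move of TWO is an infinite subset of ONE's move.\<close>
definition legal_history :: "('a set list \<Rightarrow> 'a set) \<Rightarrow> 'a set list \<Rightarrow> bool" where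
  "legal_history \<sigma> h \<longleftrightarrow>
     (\<forall>i<length h. infinite (h ! i) \<and> h ! i \<subseteq> \<sigma> (take i h))"

definition ONE_winning_strategy ::
    "'a::topological_space \<Rightarrow> ('a set list \<Rightarrow> 'a set) \<Rightarrow> bool" where
  "ONE_winning_strategy x \<sigma> \<longleftrightarrow>
     (\<forall>h. legal_history \<sigma> h \<longrightarrow> conv_set (\<sigma> h) x) \<and>
     (\<forall>T :: nat \<Rightarrow> 'a set.
        (\<forall>n. infinite (T n) \<and> T n \<subseteq> \<sigma> (map T [0..<n])) \<longrightarrow>
        \<not> conv_set (\<Union>n. T n) x)"

definition alpha_2_minus :: "'a::topological_space itself \<Rightarrow> bool" where
  "alpha_2_minus _ \<longleftrightarrow>
     (\<forall>(x::'a) (xs :: nat \<Rightarrow> nat \<Rightarrow> 'a). (\<forall>n. seq_lim (xs n) x) \<longrightarrow>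
        (\<exists>m :: nat \<Rightarrow> nat. strict_mono m \<and>
           conv_set (\<Union>n. {xs i (m n) | i. i \<le> n}) x))"

definition Ramsey_space :: "'a::topological_space itself \<Rightarrow> bool" where
  "Ramsey_space _ \<longleftrightarrow>
     (\<forall>(x::'a) (xs :: nat \<Rightarrow> nat \<Rightarrow> 'a) (ys :: nat \<Rightarrow> 'a).
        (\<forall>n. seq_lim (xs n) (ys n)) \<and> seq_lim ys x \<longrightarrow>
        (\<exists>I :: nat set. infinite I \<and>
           (\<forall>U. open U \<and> x \<in> U \<longrightarrow>
              (\<exists>k. {xs n m | n m. k < n \<and> n < m \<and> n \<in> I \<and> m \<in> I} \<subseteq> U))))"

end

(*
  Given sequences x_{n,m} \<rightarrow> x, ONE plays in inning n the values x_{n,m} over the indices m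
  that survive TWO's earlier answers (x_{i,m} \<in> T_i for all i < n).  This strategy does not win,
  so some play has a convergent union \<Union>T_n; the indices D_n surviving inning n form infinite
  sets with x_{i,m} \<in> \<Union>T_n for i \<le> n and m \<in> D_n, and any increasing choice m_n \<in> D_n
  witnesses \<alpha>_{2^-}.  In a group, translation carries this from e to every point.

  For the Ramsey property apply \<alpha>_{2^-} at e to the differences x_{n,m} - x_n and thin the
  indices to j_0 < j_1 < ... such that no value x_{a,j_{t+1}} - x_a with a \<le> j_t repeats an
  earlier one.  Then every point of the convergent set is hit only by pairs with finitely many
  left indices, so all pairs with large left index lie in a given neighbourhood of e.
*)

theory Submission
  imports Defs
begin

lemma seq_lim_finite_vimage:
  fixes f :: "nat \<Rightarrow> 'a::t1_space"
  assumes "seq_lim f x" "finite F" "x \<notin> F"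
  shows "finite (f -` F)"
proof -
  have lim: "f \<longlonglongrightarrow> x" using assms(1) by (simp add: seq_lim_def)
  have "open (- F)" using assms(2) by (simp add: finite_imp_closed open_Compl)
  moreover have "x \<in> - F" using assms(3) by simp
  ultimately have "eventually (\<lambda>n. f n \<in> - F) sequentially"
    by (rule topological_tendstoD[OF lim])
  then obtain N where "\<forall>n\<ge>N. f n \<notin> F" by (auto simp: eventually_sequentially)
  then have "f -` F \<subseteq> {..<N}" using le_less_linear by blast
  then show ?thesis by (rule finite_subset) simp
qed

lemma conv_set_seq_lim_image:
  fixes f :: "nat \<Rightarrow> 'a::t1_space"
  assumes "seq_lim f x" "infinite C"
  shows "conv_set (f ` C) x"
  unfolding conv_set_def
proof (intro conjI allI impI)
  have lim: "f \<longlonglongrightarrow> x" using assms(1) by (simp add: seq_lim_def)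
  show "x \<notin> f ` C" using assms(1) unfolding seq_lim_def by auto
  then have "finite (f -` (f ` C))" if "finite (f ` C)"
    using seq_lim_finite_vimage[OF assms(1) that] by blast
  moreover have "C \<subseteq> f -` (f ` C)" by blast
  ultimately show "infinite (f ` C)" using assms(2) finite_subset by metis
  fix U assume "open U \<and> x \<in> U"
  then have "eventually (\<lambda>n. f n \<in> U) sequentially"
    using topological_tendstoD[OF lim] by blast
  then obtain N where "\<forall>n\<ge>N. f n \<in> U" by (auto simp: eventually_sequentially)
  then have "f ` C - U \<subseteq> f ` {..<N}" using le_less_linear by blast
  then show "finite (f ` C - U)" by (rule finite_subset) simp
qed simp

lemma conv_set_subset:
  assumes "conv_set A x" "B \<subseteq> A" "infinite B"
  shows "conv_set B x"
  unfolding conv_set_def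
proof (intro conjI allI impI)
  show "countable B" "x \<notin> B"
    using assms(1,2) countable_subset unfolding conv_set_def by blast+
  fix U assume "open U \<and> x \<in> U"
  then have "finite (A - U)" using assms(1) unfolding conv_set_def by blast
  moreover have "B - U \<subseteq> A - U" using assms(2) by blast
  ultimately show "finite (B - U)" by (rule finite_subset[rotated])
qed (fact assms(3))

lemma conv_set_image:
  assumes "inj f" "continuous_on UNIV f" "conv_set A x"
  shows "conv_set (f ` A) (f x)"
  unfolding conv_set_def
proof (intro conjI allI impI)
  have "inj_on f A" using assms(1) by (rule inj_on_subset) simp
  then show "infinite (f ` A)" using assms(3) by (simp add: conv_set_def finite_image_iff)
  show "countable (f ` A)" "f x \<notin> f ` A"
    using assms(1,3) unfolding conv_set_def by (auto simp: inj_image_mem_iff)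
  fix U assume "open U \<and> f x \<in> U"
  then have "open (f -` U)" "x \<in> f -` U"
    using assms(2) by (auto simp: continuous_on_open_vimage)
  then have "finite (A - f -` U)" using assms(3) unfolding conv_set_def by blast
  moreover have "f ` A - U = f ` (A - f -` U)" by auto
  ultimately show "finite (f ` A - U)" by simp
qed

definition surviving_indices :: "(nat \<Rightarrow> nat \<Rightarrow> 'a) \<Rightarrow> 'a set list \<Rightarrow> nat set" where
  "surviving_indices xs h = {m. \<forall>i<length h. xs i m \<in> h ! i}"

definition diagonal_strategy :: "(nat \<Rightarrow> nat \<Rightarrow> 'a) \<Rightarrow> 'a set list \<Rightarrow> 'a set" where
  "diagonal_strategy xs h = xs (length h) ` surviving_indices xs h"

lemma surviving_indices_snoc:
  "surviving_indices xs (h @ [t]) = surviving_indices xs h \<inter> xs (length h) -` t"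
  unfolding surviving_indices_def by (auto simp: nth_append less_Suc_eq)

lemma infinite_surviving_indices:
  assumes "legal_history (diagonal_strategy xs) h"
  shows "infinite (surviving_indices xs h)"
proof (cases h rule: rev_exhaust)
  case (snoc h' t)
  let ?\<sigma> = "diagonal_strategy xs"
  have "infinite ((h' @ [t]) ! length h') \<and> (h' @ [t]) ! length h' \<subseteq> ?\<sigma> (take (length h') (h' @ [t]))"
    using assms[unfolded legal_history_def snoc, rule_format, of "length h'"] by simp
  then have "infinite t" "t \<subseteq> ?\<sigma> h'" by simp_all
  then have "t \<subseteq> xs (length h') ` (surviving_indices xs h' \<inter> xs (length h') -` t)"
    unfolding diagonal_strategy_def by auto
  then have "infinite (xs (length h') ` (surviving_indices xs h' \<inter> xs (length h') -` t))"
    using \<open>infinite t\<close> finite_subset by metis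
  then show ?thesis unfolding snoc surviving_indices_snoc by blast
qed (simp add: surviving_indices_def)

lemma diagonal_capture_if_ONE_not_winning:
  fixes x :: "'a::t1_space" and xs :: "nat \<Rightarrow> nat \<Rightarrow> 'a"
  assumes no_win: "\<not> (\<exists>\<sigma>. ONE_winning_strategy x \<sigma>)"
    and xs: "\<And>n. seq_lim (xs n) x"
  obtains A D where "conv_set A x" "\<And>n. infinite (D n)"
    and "\<And>n i m. i \<le> n \<Longrightarrow> m \<in> D n \<Longrightarrow> xs i m \<in> A"
proof -
  let ?\<sigma> = "diagonal_strategy xs"
  have "conv_set (?\<sigma> h) x" if "legal_history ?\<sigma> h" for h
    unfolding diagonal_strategy_def
    using conv_set_seq_lim_image[OF xs infinite_surviving_indices[OF that]] .
  with no_win obtain T :: "nat \<Rightarrow> 'a set" where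
    T: "\<And>n. infinite (T n) \<and> T n \<subseteq> ?\<sigma> (map T [0..<n])" and conv_T: "conv_set (\<Union>n. T n) x"
    unfolding ONE_winning_strategy_def by blast
  define play where "play n = map T [0..<n]" for n
  have play_length: "length (play n) = n" for n
    by (simp add: play_def)
  have play_nth: "play n ! i = T i" if "i < n" for n i
    using that by (simp add: play_def)
  have play_take: "take i (play n) = play i" if "i \<le> n" for n i
    using that by (simp add: play_def take_map)
  define D where "D n = surviving_indices xs (play (Suc n))" for n
  have "legal_history ?\<sigma> (play n)" for n
    unfolding legal_history_def
  proof (intro allI impI)
    fix i assume "i < length (play n)"
    then have "i < n" by (simp add: play_length)
    then show "infinite (play n ! i) \<and> play n ! i \<subseteq> ?\<sigma> (take i (play n))"
      using T[of i] by (simp add: play_nth play_take play_def[of i])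
  qed
  then have infinite_D: "infinite (D n)" for n
    using infinite_surviving_indices unfolding D_def by blast
  have "xs i m \<in> T i" if "i \<le> n" "m \<in> D n" for n i m
    using that play_nth[of i "Suc n"] unfolding D_def surviving_indices_def play_length by auto
  then have capture: "xs i m \<in> (\<Union>n. T n)" if "i \<le> n" "m \<in> D n" for n i m
    using that by blast
  show thesis using that[OF conv_T infinite_D capture] .
qed

lemma alpha_2_minus_at_if_ONE_not_winning:
  fixes x :: "'a::t1_space"
  assumes no_win: "\<not> (\<exists>\<sigma>. ONE_winning_strategy x \<sigma>)"
    and xs: "\<And>n. seq_lim (xs n) x"
  shows "\<exists>m :: nat \<Rightarrow> nat. strict_mono m \<and> conv_set (\<Union>n. {xs i (m n) | i. i \<le> n}) x"
proof -
  obtain A D where A: "conv_set A x" and D: "\<And>n. infinite (D n)"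
    and DA: "\<And>n i m. i \<le> n \<Longrightarrow> m \<in> D n \<Longrightarrow> xs i m \<in> A"
    using diagonal_capture_if_ONE_not_winning[where xs = xs, OF no_win xs] by blast
  have unbounded: "\<exists>b. b \<in> D n \<and> k < b" for n k
    using D[of n] unfolding infinite_nat_iff_unbounded by blast
  have "\<exists>m. \<forall>n. m n \<in> D n \<and> m n < m (Suc n)"
    by (rule dependent_nat_choice) (use unbounded in auto)
  then obtain m where m: "\<And>n. m n \<in> D n" and "strict_mono m"
    by (auto simp: strict_mono_Suc_iff)
  define B where "B = (\<Union>n. {xs i (m n) | i. i \<le> n})"
  have "infinite (range m)"
    using \<open>strict_mono m\<close> by (simp add: range_inj_infinite strict_mono_imp_inj_on)
  then have "infinite (xs 0 ` range m)"
    using conv_set_seq_lim_image[OF xs] by (simp add: conv_set_def)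
  moreover have "xs 0 ` range m \<subseteq> B" unfolding B_def by blast
  ultimately have "infinite B" using finite_subset by metis
  moreover have "B \<subseteq> A" unfolding B_def using DA m by blast
  ultimately show ?thesis
    using conv_set_subset[OF A] \<open>strict_mono m\<close> unfolding B_def by blast
qed

lemma seq_lim_diff:
  fixes f :: "nat \<Rightarrow> 'a::topological_group_add"
  assumes "seq_lim f x"
  shows "seq_lim (\<lambda>m. f m - y) (x - y)"
  using assms unfolding seq_lim_def by (auto intro: tendsto_diff simp: diff_eq_eq)

lemma alpha_2_minus_if_ONE_not_winning_at_0:
  assumes "\<not> (\<exists>\<sigma>. ONE_winning_strategy (0::'a::{topological_group_add, t1_space}) \<sigma>)"
  shows "alpha_2_minus TYPE('a)"
  unfolding alpha_2_minus_def
proof (intro allI impI)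
  fix x :: 'a and xs :: "nat \<Rightarrow> nat \<Rightarrow> 'a"
  assume "\<forall>n. seq_lim (xs n) x"
  then have "seq_lim (\<lambda>m. xs n m - x) 0" for n using seq_lim_diff[of "xs n" x x] by simp
  then obtain m where m: "strict_mono m"
    and conv: "conv_set (\<Union>n. {xs i (m n) - x | i. i \<le> n}) 0"
    using alpha_2_minus_at_if_ONE_not_winning[OF assms, of "\<lambda>n m. xs n m - x"] by blast
  have "inj (\<lambda>y::'a. y + x)" by (rule injI) simp
  moreover have "continuous_on UNIV (\<lambda>y::'a. y + x)" by (intro continuous_intros)
  ultimately have "conv_set ((\<lambda>y. y + x) ` (\<Union>n. {xs i (m n) - x | i. i \<le> n})) (0 + x)"
    using conv by (rule conv_set_image)
  moreover have "(\<lambda>y. y + x) ` (\<Union>n. {xs i (m n) - x | i. i \<le> n}) = (\<Union>n. {xs i (m n) | i. i \<le> n})"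
    by (simp add: image_UN setcompr_eq_image image_image)
  ultimately show "\<exists>m. strict_mono m \<and> conv_set (\<Union>n. {xs i (m n) | i. i \<le> n}) x"
    using m by auto
qed

text \<open>The Ramsey condition for an index set I is convergence of x_{n,m} along this filter.\<close>

definition increasing_pairs :: "nat set \<Rightarrow> (nat \<times> nat) filter" where
  "increasing_pairs I = inf (filtercomap fst at_top) (principal {(a, b). a < b \<and> a \<in> I \<and> b \<in> I})"

lemma eventually_increasing_pairs:
  "eventually P (increasing_pairs I) \<longleftrightarrow>
     (\<exists>k. \<forall>a b. k < a \<longrightarrow> a < b \<longrightarrow> a \<in> I \<longrightarrow> b \<in> I \<longrightarrow> P (a, b))"
  unfolding increasing_pairs_def eventually_inf_principal eventually_filtercomap_at_top_linorder
proof
  assume "\<exists>N. \<forall>p. N \<le> fst p \<longrightarrow> p \<in> {(a, b). a < b \<and> a \<in> I \<and> b \<in> I} \<longrightarrow> P p"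
  then obtain N where "\<forall>p. N \<le> fst p \<longrightarrow> p \<in> {(a, b). a < b \<and> a \<in> I \<and> b \<in> I} \<longrightarrow> P p" ..
  then show "\<exists>k. \<forall>a b. k < a \<longrightarrow> a < b \<longrightarrow> a \<in> I \<longrightarrow> b \<in> I \<longrightarrow> P (a, b)"
    by (intro exI[of _ N]) auto
next
  assume "\<exists>k. \<forall>a b. k < a \<longrightarrow> a < b \<longrightarrow> a \<in> I \<longrightarrow> b \<in> I \<longrightarrow> P (a, b)"
  then obtain k where "\<forall>a b. k < a \<longrightarrow> a < b \<longrightarrow> a \<in> I \<longrightarrow> b \<in> I \<longrightarrow> P (a, b)" ..
  then show "\<exists>N. \<forall>p. N \<le> fst p \<longrightarrow> p \<in> {(a, b). a < b \<and> a \<in> I \<and> b \<in> I} \<longrightarrow> P p"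
    by (intro exI[of _ "Suc k"]) (auto simp: Suc_le_eq)
qed

lemma filterlim_fst_increasing_pairs: "filterlim fst at_top (increasing_pairs I)"
  unfolding filterlim_iff_le_filtercomap increasing_pairs_def by (rule inf_le1)

lemma tendsto_increasing_pairsD:
  assumes "((\<lambda>(a, b). xs a b) \<longlongrightarrow> x) (increasing_pairs I)" "open U" "x \<in> U"
  shows "\<exists>k. {xs n m | n m. k < n \<and> n < m \<and> n \<in> I \<and> m \<in> I} \<subseteq> U"
proof -
  have "eventually (\<lambda>p. (case p of (a, b) \<Rightarrow> xs a b) \<in> U) (increasing_pairs I)"
    using topological_tendstoD[OF assms] .
  then obtain k where "\<forall>a b. k < a \<longrightarrow> a < b \<longrightarrow> a \<in> I \<longrightarrow> b \<in> I \<longrightarrow> xs a b \<in> U"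
    unfolding eventually_increasing_pairs by auto
  then show ?thesis by blast
qed

lemma fresh_index_sequence:
  fixes zs :: "nat \<Rightarrow> nat \<Rightarrow> 'a::t1_space"
  assumes zs: "\<And>n. seq_lim (zs n) z" and D: "\<And>c. infinite (D c)"
  obtains j :: "nat \<Rightarrow> nat" where "strict_mono j" "\<And>t. j (Suc t) \<in> D (j t)"
    and "\<And>t a a' b'. a \<le> j t \<Longrightarrow> a' \<le> j t \<Longrightarrow> b' \<le> j t \<Longrightarrow> zs a (j (Suc t)) \<noteq> zs a' b'"
proof -
  have "\<exists>b. c < b \<and> b \<in> D c \<and> (\<forall>a\<le>c. \<forall>a'\<le>c. \<forall>b'\<le>c. zs a b \<noteq> zs a' b')" for c
  proof -
    define F where "F = (\<lambda>(a', b'). zs a' b') ` ({..c} \<times> {..c})"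
    have "finite F" "z \<notin> F" using zs unfolding F_def seq_lim_def by auto
    then have "finite ((\<Union>a\<le>c. zs a -` F) \<union> {..c})"
      using seq_lim_finite_vimage[OF zs] by simp
    then have "infinite (D c - ((\<Union>a\<le>c. zs a -` F) \<union> {..c}))"
      using D[of c] by (rule Diff_infinite_finite)
    then have "D c - ((\<Union>a\<le>c. zs a -` F) \<union> {..c}) \<noteq> {}" by (rule infinite_imp_nonempty)
    then obtain b where "b \<in> D c - ((\<Union>a\<le>c. zs a -` F) \<union> {..c})" by blast
    then show ?thesis unfolding F_def by (intro exI[of _ b]) force
  qed
  then obtain next_index where next_index: "\<And>c. c < next_index c \<and> next_index c \<in> D c \<and>
      (\<forall>a\<le>c. \<forall>a'\<le>c. \<forall>b'\<le>c. zs a (next_index c) \<noteq> zs a' b')"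
    by metis
  define j where "j t = (next_index ^^ t) 0" for t
  have j_Suc: "j (Suc t) = next_index (j t)" for t by (simp add: j_def)
  show thesis
  proof (rule that)
    show "strict_mono j" unfolding strict_mono_Suc_iff j_Suc using next_index by blast
  qed (use next_index in \<open>auto simp: j_Suc\<close>)
qed

lemma increasing_pair_in_range:
  fixes j :: "nat \<Rightarrow> nat"
  assumes "strict_mono j" "a \<in> range j" "b \<in> range j" "a < b"
  obtains t where "a \<le> j t" "b = j (Suc t)"
proof -
  obtain s t where st: "a = j s" "b = j t" using assms(2,3) by blast
  then have "s < t" using assms(1,4) by (simp add: strict_mono_less)
  then obtain t' where "t = Suc t'" "s \<le> t'" by (cases t) auto
  then show thesis using that st assms(1) by (simp add: strict_mono_less_eq)
qed

lemma finite_fresh_pair_value: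
  fixes j :: "nat \<Rightarrow> nat" and zs :: "nat \<Rightarrow> nat \<Rightarrow> 'a"
  assumes j: "strict_mono j"
    and fresh: "\<And>t a a' b'. a \<le> j t \<Longrightarrow> a' \<le> j t \<Longrightarrow> b' \<le> j t \<Longrightarrow> zs a (j (Suc t)) \<noteq> zs a' b'"
  shows "finite {a. \<exists>t. a \<le> j t \<and> zs a (j (Suc t)) = v}"
proof (cases "\<exists>a t. a \<le> j t \<and> zs a (j (Suc t)) = v")
  case True
  then obtain a\<^sub>0 t\<^sub>0 where a\<^sub>0: "a\<^sub>0 \<le> j t\<^sub>0" "zs a\<^sub>0 (j (Suc t\<^sub>0)) = v" by blast
  \<comment> \<open>A later pair cannot take the value v again: it was excluded when its right index was chosen.\<close>
  have "a < j (Suc t\<^sub>0)" if "a \<le> j t" "zs a (j (Suc t)) = v" for a t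
  proof -
    have "j t < j (Suc t\<^sub>0)"
    proof (rule ccontr)
      assume "\<not> j t < j (Suc t\<^sub>0)"
      then have "j (Suc t\<^sub>0) \<le> j t" by linarith
      moreover have "j t\<^sub>0 < j (Suc t\<^sub>0)" using j by (simp add: strict_mono_Suc_iff)
      ultimately have "a\<^sub>0 \<le> j t" "j (Suc t\<^sub>0) \<le> j t" using a\<^sub>0(1) by auto
      then show False using fresh[OF that(1)] a\<^sub>0(2) that(2) by blast
    qed
    then show ?thesis using that(1) by simp
  qed
  then have "{a. \<exists>t. a \<le> j t \<and> zs a (j (Suc t)) = v} \<subseteq> {..< j (Suc t\<^sub>0)}" by blast
  then show ?thesis by (rule finite_subset) simp
next
  case False
  then have "{a. \<exists>t. a \<le> j t \<and> zs a (j (Suc t)) = v} = {}" by blast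
  then show ?thesis by (simp only: finite.emptyI)
qed

lemma tendsto_increasing_pairs_if_diagonal_capture:
  fixes zs :: "nat \<Rightarrow> nat \<Rightarrow> 'a::t1_space"
  assumes zs: "\<And>n. seq_lim (zs n) z" and B: "conv_set B z" and D: "\<And>c. infinite (D c)"
    and DB: "\<And>c i b. i \<le> c \<Longrightarrow> b \<in> D c \<Longrightarrow> zs i b \<in> B"
  obtains I where "infinite I" "((\<lambda>(a, b). zs a b) \<longlongrightarrow> z) (increasing_pairs I)"
proof -
  obtain j where j: "strict_mono j" and j_D: "\<And>t. j (Suc t) \<in> D (j t)"
    and fresh: "\<And>t a a' b'. a \<le> j t \<Longrightarrow> a' \<le> j t \<Longrightarrow> b' \<le> j t \<Longrightarrow> zs a (j (Suc t)) \<noteq> zs a' b'"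
    using fresh_index_sequence[where zs = zs and D = D, OF zs D] by blast
  have "((\<lambda>(a, b). zs a b) \<longlongrightarrow> z) (increasing_pairs (range j))"
  proof (rule topological_tendstoI)
    fix V assume V: "open V" "z \<in> V"
    define bad where "bad = {a. \<exists>t. a \<le> j t \<and> zs a (j (Suc t)) \<in> B - V}"
    have "bad = (\<Union>v\<in>B - V. {a. \<exists>t. a \<le> j t \<and> zs a (j (Suc t)) = v})"
      unfolding bad_def by blast
    moreover have "finite (B - V)" using B V unfolding conv_set_def by blast
    ultimately have "finite bad"
      using finite_fresh_pair_value[where zs = zs, OF j fresh] by (simp add: finite_UN_I)
    then obtain k where k: "\<And>a. a \<in> bad \<Longrightarrow> a \<le> k"
      unfolding finite_nat_set_iff_bounded_le by blast
    have "zs a b \<in> V" if ab: "k < a" "a < b" "a \<in> range j" "b \<in> range j" for a b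
    proof -
      obtain t where t: "a \<le> j t" "b = j (Suc t)" using increasing_pair_in_range[OF j ab(3,4,2)] .
      then have "zs a b \<in> B" using DB j_D by blast
      moreover have "a \<notin> bad" using k ab(1) by force
      ultimately show ?thesis using t unfolding bad_def by blast
    qed
    then show "eventually (\<lambda>p. (case p of (a, b) \<Rightarrow> zs a b) \<in> V) (increasing_pairs (range j))"
      unfolding eventually_increasing_pairs by auto
  qed
  moreover have "infinite (range j)"
    using j by (simp add: range_inj_infinite strict_mono_imp_inj_on)
  ultimately show thesis using that by blast
qed

lemma Ramsey_space_if_alpha_2_minus:
  assumes "alpha_2_minus TYPE('a::{topological_group_add, t1_space})"
  shows "Ramsey_space TYPE('a)"
  unfolding Ramsey_space_def
proof (intro allI impI, elim conjE)
  fix x :: 'a and xs :: "nat \<Rightarrow> nat \<Rightarrow> 'a" and ys :: "nat \<Rightarrow> 'a"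
  assume xs: "\<forall>n. seq_lim (xs n) (ys n)" and ys: "seq_lim ys x"
  define zs where "zs n m = xs n m - ys n" for n m
  have zs: "seq_lim (zs n) 0" for n
    using seq_lim_diff[of "xs n" "ys n" "ys n"] xs unfolding zs_def by simp
  then obtain m where "strict_mono m" and B: "conv_set (\<Union>n. {zs i (m n) | i. i \<le> n}) 0"
    using assms[unfolded alpha_2_minus_def, rule_format, where x = 0 and xs = zs] by blast
  define D where "D c = m ` {c..}" for c
  have D_infinite: "infinite (D c)" for c
    unfolding D_def using \<open>strict_mono m\<close>
    by (simp add: finite_image_iff strict_mono_imp_inj_on infinite_Ici)
  have D_capture: "zs i b \<in> (\<Union>n. {zs i (m n) | i. i \<le> n})" if "i \<le> c" "b \<in> D c" for c i b
  proof -
    from that(2) obtain n where "c \<le> n" "b = m n" unfolding D_def by auto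
    with that(1) show ?thesis by (auto intro: le_trans)
  qed
  obtain I where "infinite I" and lim_zs: "((\<lambda>(a, b). zs a b) \<longlongrightarrow> 0) (increasing_pairs I)"
    using tendsto_increasing_pairs_if_diagonal_capture[where zs = zs and D = D, OF zs B D_infinite D_capture] .
  have "ys \<longlonglongrightarrow> x" using ys by (simp add: seq_lim_def)
  then have "((\<lambda>p. ys (fst p)) \<longlongrightarrow> x) (increasing_pairs I)"
    using filterlim_fst_increasing_pairs by (rule filterlim_compose)
  with lim_zs have "((\<lambda>p. (case p of (a, b) \<Rightarrow> zs a b) + ys (fst p)) \<longlongrightarrow> 0 + x) (increasing_pairs I)"
    by (rule tendsto_add)
  moreover have "(\<lambda>p. (case p of (a, b) \<Rightarrow> zs a b) + ys (fst p)) = (\<lambda>(a, b). xs a b)"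
    by (auto simp: fun_eq_iff zs_def)
  ultimately have lim_xs: "((\<lambda>(a, b). xs a b) \<longlongrightarrow> x) (increasing_pairs I)" by simp
  show "\<exists>I. infinite I \<and> (\<forall>U. open U \<and> x \<in> U \<longrightarrow>
      (\<exists>k. {xs n m | n m. k < n \<and> n < m \<and> n \<in> I \<and> m \<in> I} \<subseteq> U))"
    using \<open>infinite I\<close> tendsto_increasing_pairsD[OF lim_xs] by blast
qed

theorem corollary2p11:
  assumes "\<not> (\<exists>\<sigma>. ONE_winning_strategy (0::'a::{topological_group_add, t2_space}) \<sigma>)"
  shows "alpha_2_minus TYPE('a) \<and> Ramsey_space TYPE('a)"
proof
  show "alpha_2_minus TYPE('a)" using assms by (rule alpha_2_minus_if_ONE_not_winning_at_0)
  then show "Ramsey_space TYPE('a)" by (rule Ramsey_space_if_alpha_2_minus)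
qed

end
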